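(* Let $n\geq 4$ and let $\mathcal{T}_n$ denote the set of trees on $n$ vertices. If $T\in\mathcal{T}_n$ and $T$ is not isomorphic to the balanced double star $S_{\lfloor\frac{n-2}{2}\rfloor,\lceil\frac{n-2}{2}\rceil}$, then $T$ is not maximal with respect to $e^{M_2}$ over $\mathcal{T}_n$, i.e., there exists $T''\in\mathcal{T}_n$ with $e^{M_2}(T'')>e^{M_2}(T)$.
   Context: For a tree (graph) $G$ with edge set $E(G)$ and vertex degrees $d_G(v)$, the exponential of the second Zagreb index is $e^{M_2}(G)=\sum_{uv\in E(G)} e^{d_G(u)d_G(v)}$. For integers $x,y\geq 1$, the double star $S_{x,y}$ is the tree on $x+y+2$ vertices with exactly two non-pendent vertices, of degrees $x+1$ and $y+1$ (these two vertices are adjacent, the first has $x$ pendant neighbours and the second has $y$ pendant neighbours). *)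

theory Defs
  imports Complex_Main
begin

definition simple_graph :: "'a set \<Rightarrow> 'a set set \<Rightarrow> bool" where
  "simple_graph V E \<longleftrightarrow> finite V \<and>
     (\<forall>e\<in>E. \<exists>u v. e = {u, v} \<and> u \<noteq> v \<and> u \<in> V \<and> v \<in> V)"

definition adj :: "'a set set \<Rightarrow> 'a \<Rightarrow> 'a \<Rightarrow> bool" where
  "adj E u v \<longleftrightarrow> {u, v} \<in> E \<and> u \<noteq> v"

definition connected_graph :: "'a set \<Rightarrow> 'a set set \<Rightarrow> bool" where
  "connected_graph V E \<longleftrightarrow> (\<forall>u\<in>V. \<forall>v\<in>V. (adj E)\<^sup>*\<^sup>* u v)"

definition is_cycle :: "'a set set \<Rightarrow> 'a list \<Rightarrow> bool" where
  "is_cycle E vs \<longleftrightarrow> length vs \<ge> 3 \<and> distinct vs \<and>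
     (\<forall>i. Suc i < length vs \<longrightarrow> adj E (vs ! i) (vs ! Suc i)) \<and>
     adj E (last vs) (hd vs)"

definition is_tree :: "'a set \<Rightarrow> 'a set set \<Rightarrow> bool" where
  "is_tree V E \<longleftrightarrow> simple_graph V E \<and> V \<noteq> {} \<and> connected_graph V E \<and>
     \<not> (\<exists>vs. is_cycle E vs)"

definition graph_iso :: "'a set \<Rightarrow> 'a set set \<Rightarrow> 'b set \<Rightarrow> 'b set set \<Rightarrow> bool" where
  "graph_iso V E W F \<longleftrightarrow> (\<exists>f. bij_betw f V W \<and>
     (\<forall>u\<in>V. \<forall>v\<in>V. {u, v} \<in> E \<longleftrightarrow> {f u, f v} \<in> F))"

definition degree :: "'a set set \<Rightarrow> 'a \<Rightarrow> nat" where
  "degree E v = card {e\<in>E. v \<in> e}"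

definition expM2 :: "'a set set \<Rightarrow> real" where
  "expM2 E = (\<Sum>e\<in>E. exp (\<Prod>v\<in>e. real (degree E v)))"

text \<open>Double star S_{x,y} on vertices {0..<x+y+2}: vertex 0 (degree x+1) is adjacent
to the pendants 1..x and to vertex x+1; vertex x+1 (degree y+1) is adjacent to the
pendants x+2..x+y+1.\<close>
definition double_star_edges :: "nat \<Rightarrow> nat \<Rightarrow> nat set set" where
  "double_star_edges x y =
     {{0, i} | i. 1 \<le> i \<and> i \<le> x + 1} \<union> {{x + 1, j} | j. x + 2 \<le> j \<and> j \<le> x + y + 1}"

end

theory Submission
  imports Defs
begin

text \<open>Let \<open>P = n\<^sup>2 div 4 = (a + 1)(b + 1)\<close> for the balanced double star \<open>S(a,b)\<close>; its
  central edge and one pendant edge at each centre give \<open>expM2 S(a,b) \<ge> exp P + 2 exp 2\<close>.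
  In a tree adjacent vertices have disjoint neighbourhoods, so \<open>d(u) + d(v) \<le> n\<close> on every edge.

  If equality holds on an edge \<open>uv\<close>, the tree is the double star centred at \<open>u\<close> and \<open>v\<close>; unless it
  is the balanced one, \<open>d(u) d(v) \<le> P - 1\<close> and
  \<open>expM2 \<le> exp (P - 1) + (n - 2) exp (n - 1) < exp P + 2 exp 2\<close>.

  Otherwise \<open>d(u) + d(v) \<le> n - 1\<close> on every edge, so \<open>d(u) d(v) \<le> Q = (n - 1)\<^sup>2 div 4\<close>. By AM-GM,
  \<open>exp (d(u) d(v)) \<le> n/4 exp Q (1/d(u) + 1/d(v))\<close>, and summing \<open>1/d(u) + 1/d(v)\<close> over the edges
  counts every vertex at most once, so \<open>expM2 \<le> n\<^sup>2/4 exp Q \<le> exp (Q + n div 2) = exp P\<close>.\<close>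

section \<open>Arithmetic of \<open>n\<^sup>2 div 4\<close>\<close>

lemma mult_le_square_div_4:
  fixes s t m :: nat
  assumes "s + t \<le> m"
  shows "s * t \<le> m\<^sup>2 div 4"
proof -
  have "int (4 * (s * t)) \<le> int ((s + t)\<^sup>2)"
    using sum_squares_ge_zero[of "int s - int t" 0] by (simp add: power2_eq_square algebra_simps)
  also have "\<dots> \<le> int (m\<^sup>2)" using assms by (simp add: power_mono)
  finally have "4 * (s * t) \<le> m\<^sup>2" by (simp only: of_nat_le_iff)
  then show ?thesis by (simp add: less_eq_div_iff_mult_less_eq mult.commute)
qed

lemma balanced_mult_eq_square_div_4:
  fixes p q :: nat
  assumes "p \<le> q" and "q \<le> p + 1"
  shows "p * q = (p + q)\<^sup>2 div 4"
proof (cases "q = p")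
  case True
  moreover have "(p + p)\<^sup>2 = 4 * (p * p)" by (simp add: power2_eq_square algebra_simps)
  ultimately show ?thesis by simp
next
  case False
  with assms have "q = p + 1" by simp
  moreover have "(p + (p + 1))\<^sup>2 = 4 * (p * (p + 1)) + 1" by (simp add: power2_eq_square algebra_simps)
  ultimately show ?thesis by simp
qed

lemma add_eq_mult_eq_imp_eq:
  fixes s t p q :: nat
  assumes sum: "s + t = p + q" and prod: "s * t = p * q"
  shows "s = p \<or> s = q"
proof -
  have sum': "int p + int q = int s + int t" and prod': "int p * int q = int s * int t"
    using sum prod by (simp_all flip: of_nat_add of_nat_mult)
  have "(int s - int p) * (int s - int q) = int s * int s - int s * (int p + int q) + int p * int q"
    by (simp add: algebra_simps)
  also have "\<dots> = 0" unfolding sum' prod' by (simp add: algebra_simps)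
  finally show ?thesis by simp
qed

lemma square_div_4_eq_pred_square_div_4_add_half:
  assumes "1 \<le> m"
  shows "(m::nat)\<^sup>2 div 4 = (m - 1)\<^sup>2 div 4 + m div 2"
proof (cases "even m")
  case True
  then obtain k where k: "m = 2 * k" by blast
  with assms have "(m - 1)\<^sup>2 = 4 * (k * k - k) + 1"
    by (cases k) (simp_all add: power2_eq_square algebra_simps)
  then have "(m - 1)\<^sup>2 div 4 = k * k - k" by simp
  moreover have "k \<le> k * k" by simp
  ultimately show ?thesis using k by (simp add: power2_eq_square)
next
  case False
  then obtain k where k: "m = 2 * k + 1" using oddE by blast
  moreover have "(2 * k + 1)\<^sup>2 = 4 * (k * k + k) + 1" by (simp add: power2_eq_square algebra_simps)
  ultimately show ?thesis by (simp add: power2_eq_square)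
qed

section \<open>Exponential estimates\<close>

lemma exp_one_ge: "5 / 2 \<le> exp (1::real)"
  using exp_lower_Taylor_quadratic[of 1] by simp

lemma exp_of_nat_eq_power: "exp (real n) = exp 1 ^ n"
  using exp_of_nat_mult[of n 1] by simp

lemma two_mult_less_exp: "2 * x < exp (x::real)"
proof (cases "x < 0")
  case True
  then show ?thesis using exp_gt_zero[of x] by linarith
next
  case False
  have "2 * x < 1 + x + x\<^sup>2 / 2"
    using sum_squares_ge_zero[of "x - 1" 0] by (simp add: power2_eq_square field_simps)
  also have "\<dots> \<le> exp x" using False by (intro exp_lower_Taylor_quadratic) simp
  finally show ?thesis .
qed

lemma odd_square_le_four_exp:
  assumes "0 \<le> x"
  shows "(2 * x + 1)\<^sup>2 \<le> 4 * exp (x::real)"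
proof -
  have "2 * x + 1 \<le> 2 * (1 + x / 2 + (x / 2)\<^sup>2 / 2)"
    using sum_squares_ge_zero[of "x / 2 - 1" 0] by (simp add: power2_eq_square field_simps)
  also have "\<dots> \<le> 2 * exp (x / 2)"
    using exp_lower_Taylor_quadratic[of "x / 2"] assms by simp
  finally have "(2 * x + 1)\<^sup>2 \<le> (2 * exp (x / 2))\<^sup>2"
    using assms by (intro power_mono) auto
  also have "\<dots> = 4 * exp x"
    by (simp add: power_mult_distrib exp_double[symmetric])
  finally show ?thesis .
qed

lemma square_le_four_exp_half: "real (n\<^sup>2) \<le> 4 * exp (real (n div 2))"
proof -
  have "real n \<le> 2 * real (n div 2) + 1" by linarith
  then have "real (n\<^sup>2) \<le> (2 * real (n div 2) + 1)\<^sup>2"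
    by (simp add: power_mono)
  also have "\<dots> \<le> 4 * exp (real (n div 2))"
    by (rule odd_square_le_four_exp) simp
  finally show ?thesis .
qed

lemma exp_mult_le_inverse_sum:
  fixes p q N Q :: real
  assumes "0 < p" "0 < q" "p + q \<le> N" "p * q \<le> Q"
  shows "exp (p * q) \<le> N / 4 * exp Q * (1 / p + 1 / q)"
proof -
  have "4 * (p * q) \<le> (p + q) * (p + q)"
    using sum_squares_ge_zero[of "p - q" 0] by (simp add: algebra_simps power2_eq_square)
  also have "\<dots> \<le> N * (p + q)" using assms by (intro mult_right_mono) auto
  finally have "1 \<le> N / 4 * (1 / p + 1 / q)"
    using assms by (simp add: field_simps)
  moreover have "exp (p * q) \<le> exp Q" using assms by simp
  ultimately have "exp (p * q) * 1 \<le> exp Q * (N / 4 * (1 / p + 1 / q))"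
    by (intro mult_mono) auto
  then show ?thesis by (simp add: mult_ac)
qed

lemma exp_dominating_edge_bound_less:
  assumes "4 \<le> n"
  shows "real (n - 2) * exp (real (n - 1)) + exp (real (n\<^sup>2 div 4 - 1))
           < exp (real (n\<^sup>2 div 4)) + 2 * exp 2"
proof -
  define e where "e = exp (1::real)"
  have e: "5 / 2 \<le> e" using exp_one_ge by (simp add: e_def)
  have exp_e: "exp (real k) = e ^ k" for k by (simp add: e_def exp_of_nat_eq_power)
  have exp_2: "exp 2 = e\<^sup>2" using exp_e[of 2] by simp
  consider "n = 4" | "n = 5" | "6 \<le> n" using assms by linarith
  then show ?thesis
  proof cases
    case 1
    have "0 < e\<^sup>2 * ((e - 1) * (e - 2))" using e by (intro mult_pos_pos) auto
    then have "2 * e ^ 3 + e ^ 3 < e ^ 4 + 2 * e\<^sup>2"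
      by (simp add: algebra_simps power2_eq_square power3_eq_cube power4_eq_xxxx)
    then show ?thesis unfolding exp_e exp_2 using 1 by simp
  next
    case 2
    have "15 / 4 \<le> e * (e - 1)" using mult_mono[of "5 / 2" e "3 / 2" "e - 1"] e by simp
    then have "0 \<le> e ^ 4 * (e * (e - 1) - 3)" using e by (intro mult_nonneg_nonneg) auto
    moreover have "0 < e\<^sup>2" using e by simp
    ultimately have "3 * e ^ 4 + e ^ 5 < e ^ 6 + 2 * e\<^sup>2"
      by (simp add: algebra_simps power2_eq_square power3_eq_cube power4_eq_xxxx numeral_eq_Suc)
    then show ?thesis unfolding exp_e exp_2 using 2 by simp
  next
    case 3
    define P where "P = n\<^sup>2 div 4"
    have "n - 2 \<le> 2 * (P - n)"
    proof (cases "even n")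
      case True
      then obtain k where k: "n = 2 * k" by blast
      then have "P = k * k" by (simp add: P_def power2_eq_square)
      moreover have "3 * k \<le> k * k" using 3 k by (intro mult_right_mono) auto
      ultimately show ?thesis using k by linarith
    next
      case False
      then obtain k where k: "n = 2 * k + 1" using oddE by blast
      moreover have "(2 * k + 1)\<^sup>2 = 4 * (k * k + k) + 1" by (simp add: power2_eq_square algebra_simps)
      ultimately have "P = k * k + k" by (simp add: P_def)
      moreover have "3 * k \<le> k * k" using 3 k by (intro mult_right_mono) auto
      ultimately show ?thesis using k by linarith
    qed
    then have "real (n - 2) < exp (real (P - n))"
      using two_mult_less_exp[of "real (P - n)"] by linarith
    then have "real (n - 2) * exp (real (n - 1)) < exp (real (P - n)) * exp (real (n - 1))"
      by simp
    also have "\<dots> = exp (real (P - 1))"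
      using \<open>n - 2 \<le> 2 * (P - n)\<close> 3 by (simp add: exp_add[symmetric] of_nat_diff)
    finally have "real (n - 2) * exp (real (n - 1)) + exp (real (P - 1)) < 2 * exp (real (P - 1))"
      by simp
    also have "\<dots> \<le> e * exp (real (P - 1))" using e by (intro mult_right_mono) auto
    also have "\<dots> = exp (real P)"
      using \<open>n - 2 \<le> 2 * (P - n)\<close> 3
      by (simp add: e_def exp_add[symmetric] of_nat_diff)
    finally show ?thesis unfolding P_def by (smt (verit) exp_gt_zero)
  qed
qed

section \<open>Simple graphs\<close>

abbreviation neighbours :: "'a set set \<Rightarrow> 'a \<Rightarrow> 'a set" where
  "neighbours E x \<equiv> {y. adj E x y}"

lemma adj_commute: "adj E u v \<longleftrightarrow> adj E v u"
  unfolding adj_def by (auto simp: insert_commute)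

lemma adj_irrefl [simp]: "\<not> adj E x x"
  by (simp add: adj_def)

lemma symp_adj: "symp (adj E)"
  by (rule sympI) (simp add: adj_commute)

lemma simple_graph_edge_subset: "simple_graph V E \<Longrightarrow> e \<in> E \<Longrightarrow> e \<subseteq> V"
  unfolding simple_graph_def by auto

lemma simple_graph_finite_edges: "simple_graph V E \<Longrightarrow> finite E"
  using simple_graph_edge_subset finite_subset[of E "Pow V"]
  unfolding simple_graph_def by auto

lemma adj_in_vertices:
  assumes "simple_graph V E" and "adj E u v"
  shows "u \<in> V" "v \<in> V"
  using assms simple_graph_edge_subset unfolding adj_def by auto

lemma simple_graph_edge_iff_adj: "simple_graph V E \<Longrightarrow> {x, y} \<in> E \<longleftrightarrow> adj E x y"
  unfolding simple_graph_def adj_def by (auto simp: doubleton_eq_iff)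

lemma simple_graph_edgeE:
  assumes "simple_graph V E" and "e \<in> E"
  obtains x y where "e = {x, y}" and "adj E x y"
proof -
  from assms obtain x y where "e = {x, y}" "x \<noteq> y"
    unfolding simple_graph_def by blast
  with assms that show thesis unfolding adj_def by blast
qed

lemma neighbours_subset: "simple_graph V E \<Longrightarrow> neighbours E x \<subseteq> V"
  by (auto intro: adj_in_vertices(2))

lemma finite_neighbours: "simple_graph V E \<Longrightarrow> finite (neighbours E x)"
  by (simp add: finite_subset[OF neighbours_subset] simple_graph_def)

lemma degree_eq_card_neighbours:
  assumes "simple_graph V E"
  shows "degree E x = card (neighbours E x)"
proof -
  have "{e \<in> E. x \<in> e} = (\<lambda>y. {x, y}) ` neighbours E x"
  proof (intro equalityI subsetI)
    fix e assume "e \<in> {e \<in> E. x \<in> e}"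
    with assms obtain p q where "e = {p, q}" "adj E p q" "x \<in> e"
      by (blast elim: simple_graph_edgeE)
    then show "e \<in> (\<lambda>y. {x, y}) ` neighbours E x"
      by (auto simp: adj_commute insert_commute)
  qed (auto simp: adj_def)
  moreover have "inj_on (\<lambda>y. {x, y}) (neighbours E x)"
    by (auto simp: inj_on_def doubleton_eq_iff adj_def)
  ultimately show ?thesis
    unfolding degree_def by (simp add: card_image)
qed

lemma simple_graph_edges_at_adj:
  assumes s: "simple_graph V E" and uv: "adj E u v"
  shows "{e \<in> E. u \<in> e} \<inter> {e \<in> E. v \<in> e} = {{u, v}}"
proof
  show "{e \<in> E. u \<in> e} \<inter> {e \<in> E. v \<in> e} \<subseteq> {{u, v}}"
  proof
    fix e assume e: "e \<in> {e \<in> E. u \<in> e} \<inter> {e \<in> E. v \<in> e}"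
    then have "e \<in> E" by simp
    then obtain x y where "e = {x, y}" "adj E x y" by (rule simple_graph_edgeE[OF s])
    with e uv show "e \<in> {{u, v}}" by (auto simp: adj_def)
  qed
  show "{{u, v}} \<subseteq> {e \<in> E. u \<in> e} \<inter> {e \<in> E. v \<in> e}" using uv by (simp add: adj_def)
qed

lemma degree_pos: "simple_graph V E \<Longrightarrow> e \<in> E \<Longrightarrow> x \<in> e \<Longrightarrow> 0 < degree E x"
  unfolding degree_def using simple_graph_finite_edges by (fastforce simp: card_gt_0_iff)

lemma is_cycle_triangle: "adj E x y \<Longrightarrow> adj E y z \<Longrightarrow> adj E z x \<Longrightarrow> is_cycle E [x, y, z]"
  unfolding is_cycle_def by (auto simp: less_Suc_eq nth_Cons' adj_def)

lemma is_cycle_square: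
  "adj E x y \<Longrightarrow> adj E y z \<Longrightarrow> adj E z w \<Longrightarrow> adj E w x \<Longrightarrow> distinct [x, y, z, w]
   \<Longrightarrow> is_cycle E [x, y, z, w]"
  unfolding is_cycle_def by (auto simp: less_Suc_eq nth_Cons')

lemma no_cycle_if_two_branch_vertices:
  assumes branch: "\<And>x y z. adj E x y \<Longrightarrow> adj E x z \<Longrightarrow> y \<noteq> z \<Longrightarrow> x = c\<^sub>1 \<or> x = c\<^sub>2"
  shows "\<not> is_cycle E vs"
proof
  assume cycle: "is_cycle E vs"
  then have len: "length vs \<ge> 3" and "distinct vs"
    and step: "\<And>i. Suc i < length vs \<Longrightarrow> adj E (vs ! i) (vs ! Suc i)"
    unfolding is_cycle_def by auto
  from len have "vs \<noteq> []" by auto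
  with cycle have close: "adj E (vs ! (length vs - 1)) (vs ! 0)"
    unfolding is_cycle_def by (simp add: hd_conv_nth last_conv_nth)
  define L where "L = length vs - 1"
  have L: "L \<ge> 2" "Suc L = length vs" using len unfolding L_def by auto
  have ne: "i \<le> L \<Longrightarrow> j \<le> L \<Longrightarrow> i \<noteq> j \<Longrightarrow> vs ! i \<noteq> vs ! j" for i j
    using \<open>distinct vs\<close> L by (simp add: nth_eq_iff_index_eq)
  \<comment> \<open>the first, second and last vertex of a cycle each have two distinct neighbours on it\<close>
  have "vs ! 0 \<in> {c\<^sub>1, c\<^sub>2}"
    using branch[of _ "vs ! 1" "vs ! L"] step[of 0] close ne[of 1 L] L
    by (auto simp: L_def adj_commute)
  moreover have "vs ! 1 \<in> {c\<^sub>1, c\<^sub>2}"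
    using branch[of _ "vs ! 0" "vs ! 2"] step[of 0] step[of 1] ne[of 0 2] L
    by (auto simp: adj_commute numeral_2_eq_2)
  moreover have "vs ! L \<in> {c\<^sub>1, c\<^sub>2}"
  proof -
    have "adj E (vs ! (L - 1)) (vs ! L)" using step[of "L - 1"] L by simp
    then show ?thesis
      using branch[of "vs ! L" "vs ! (L - 1)" "vs ! 0"] close ne[of "L - 1" 0] L
      by (auto simp: L_def adj_commute)
  qed
  moreover have "vs ! 0 \<noteq> vs ! 1" "vs ! 0 \<noteq> vs ! L" "vs ! 1 \<noteq> vs ! L"
    using ne L by auto
  ultimately show False by auto
qed

lemma sum_edges_inverse_degree_le:
  assumes s: "simple_graph V E"
  shows "(\<Sum>e\<in>E. \<Sum>v\<in>e. 1 / real (degree E v)) \<le> real (card V)"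
proof -
  have fin: "finite E" "finite V"
    using s simple_graph_finite_edges by (auto simp: simple_graph_def)
  have "(\<Sum>e\<in>E. \<Sum>v\<in>e. 1 / real (degree E v)) = (\<Sum>e\<in>E. \<Sum>v | v \<in> V \<and> v \<in> e. 1 / real (degree E v))"
    using simple_graph_edge_subset[OF s] by (intro sum.cong) (auto intro: sum.cong)
  also have "\<dots> = (\<Sum>v\<in>V. \<Sum>e | e \<in> E \<and> v \<in> e. 1 / real (degree E v))"
    using fin by (rule sum.swap_restrict)
  also have "\<dots> = (\<Sum>v\<in>V. real (degree E v) * (1 / real (degree E v)))"
    by (simp add: degree_def)
  also have "\<dots> \<le> (\<Sum>v\<in>V. 1)"
    by (intro sum_mono) simp
  finally show ?thesis by simp
qed

lemma expM2_le_of_edge_degree_bounds: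
  assumes s: "simple_graph V E"
    and sum_le: "\<And>x y. adj E x y \<Longrightarrow> degree E x + degree E y \<le> card V"
    and prod_le: "\<And>x y. adj E x y \<Longrightarrow> degree E x * degree E y \<le> Q"
  shows "expM2 E \<le> real (card V) ^ 2 / 4 * exp (real Q)"
proof -
  let ?d = "\<lambda>v. real (degree E v)"
  let ?C = "real (card V) / 4 * exp (real Q)"
  have "exp (\<Prod>v\<in>e. ?d v) \<le> ?C * (\<Sum>v\<in>e. 1 / ?d v)" if e: "e \<in> E" for e
  proof -
    from e obtain x y where xy: "e = {x, y}" "adj E x y" by (rule simple_graph_edgeE[OF s])
    then have "x \<noteq> y" "0 < degree E x" "0 < degree E y"
      using degree_pos[OF s e] by (auto simp: adj_def)
    with xy sum_le[OF xy(2)] prod_le[OF xy(2)] show ?thesis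
      using exp_mult_le_inverse_sum[of "?d x" "?d y" "real (card V)" "real Q"]
      by (simp flip: of_nat_add of_nat_mult)
  qed
  then have "expM2 E \<le> (\<Sum>e\<in>E. ?C * (\<Sum>v\<in>e. 1 / ?d v))"
    unfolding expM2_def by (rule sum_mono)
  also have "\<dots> = ?C * (\<Sum>e\<in>E. \<Sum>v\<in>e. 1 / ?d v)" by (simp add: sum_distrib_left)
  also have "\<dots> \<le> ?C * real (card V)"
    using sum_edges_inverse_degree_le[OF s] by (intro mult_left_mono) auto
  finally show ?thesis by (simp add: power2_eq_square mult_ac)
qed

section \<open>Trees with a dominating edge\<close>

lemma tree_simple_graph: "is_tree V E \<Longrightarrow> simple_graph V E"
  unfolding is_tree_def by simp

lemma tree_no_cycle: "is_tree V E \<Longrightarrow> \<not> is_cycle E vs"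
  unfolding is_tree_def by blast

lemma tree_adj_neighbours_disjoint:
  assumes "is_tree V E" and "adj E u v"
  shows "neighbours E u \<inter> neighbours E v = {}"
proof (rule ccontr)
  assume "neighbours E u \<inter> neighbours E v \<noteq> {}"
  then obtain w where "adj E u w" "adj E v w" by auto
  with \<open>adj E u v\<close> have "is_cycle E [u, v, w]"
    by (simp add: is_cycle_triangle adj_commute)
  with assms(1) show False by (simp add: tree_no_cycle)
qed

lemma tree_adj_card_neighbours_Un:
  assumes "is_tree V E" and "adj E u v"
  shows "card (neighbours E u \<union> neighbours E v) = degree E u + degree E v"
proof -
  have "simple_graph V E" using assms(1) by (rule tree_simple_graph)
  then show ?thesis
    using tree_adj_neighbours_disjoint[OF assms]
    by (simp add: card_Un_disjoint finite_neighbours degree_eq_card_neighbours)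
qed

lemma tree_adj_degree_sum_le:
  assumes "is_tree V E" and "adj E u v"
  shows "degree E u + degree E v \<le> card V"
proof -
  have s: "simple_graph V E" using assms(1) by (rule tree_simple_graph)
  have "card (neighbours E u \<union> neighbours E v) \<le> card V"
    using neighbours_subset[OF s] s by (intro card_mono) (auto simp: simple_graph_def)
  then show ?thesis using tree_adj_card_neighbours_Un[OF assms] by simp
qed

lemma tree_dominating_edge_cover:
  assumes "is_tree V E" and "adj E u v" and "degree E u + degree E v = card V"
  shows "neighbours E u \<union> neighbours E v = V"
proof -
  have s: "simple_graph V E" using assms(1) by (rule tree_simple_graph)
  show ?thesis
  proof (rule card_subset_eq)
    show "finite V" using s by (simp add: simple_graph_def)
    show "neighbours E u \<union> neighbours E v \<subseteq> V" using neighbours_subset[OF s] by blast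
    show "card (neighbours E u \<union> neighbours E v) = card V"
      using tree_adj_card_neighbours_Un[OF assms(1,2)] assms(3) by simp
  qed
qed

lemma tree_dominating_edge_meets:
  assumes t: "is_tree V E" and uv: "adj E u v" and dom: "degree E u + degree E v = card V"
    and xy: "adj E x y"
  shows "x \<in> {u, v} \<or> y \<in> {u, v}"
proof (rule ccontr)
  assume outside: "\<not> (x \<in> {u, v} \<or> y \<in> {u, v})"
  have cover: "neighbours E u \<union> neighbours E v = V"
    using tree_dominating_edge_cover[OF assms(1-3)] .
  have xV: "x \<in> V" and yV: "y \<in> V"
    using adj_in_vertices[OF tree_simple_graph[OF t] xy] by auto
  have distinct: "x \<noteq> y" "u \<noteq> v" using xy uv by (auto simp: adj_def)
  have acyclic: "\<not> is_cycle E vs" for vs using t by (rule tree_no_cycle)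
  \<comment> \<open>\<open>x\<close> and \<open>y\<close> are adjacent to \<open>u\<close> or \<open>v\<close>: a common centre closes a triangle,
    different centres close a square through the edge \<open>uv\<close>\<close>
  have no_common: False if "adj E w x" "adj E w y" for w
    using acyclic[of "[w, x, y]"] that xy by (simp add: is_cycle_triangle adj_commute)
  have no_crossing: False if "adj E w x" "adj E w' y" "adj E w w'" "w \<in> {u, v}" "w' \<in> {u, v}" for w w'
    using acyclic[of "[w, x, y, w']"] that xy outside distinct
    by (auto simp: is_cycle_square adj_commute)
  obtain cx where cx: "cx \<in> {u, v}" "adj E cx x" using cover xV by blast
  obtain cy where cy: "cy \<in> {u, v}" "adj E cy y" using cover yV by blast
  show False
  proof (cases "cx = cy")
    case True
    then show False using no_common cx cy by blast
  next
    case False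
    with cx(1) cy(1) uv have "adj E cx cy" by (auto simp: adj_commute)
    then show False using no_crossing cx cy by blast
  qed
qed

lemma tree_dominating_edge_leaf:
  assumes t: "is_tree V E" and uv: "adj E u v" and dom: "degree E u + degree E v = card V"
    and uw: "adj E u w" and "w \<noteq> v"
  shows "degree E w = 1"
proof -
  have "neighbours E w = {u}"
  proof (intro equalityI subsetI)
    fix z assume "z \<in> neighbours E w"
    then have wz: "adj E w z" by simp
    have "z \<noteq> v"
      using tree_adj_neighbours_disjoint[OF t uv] uw wz by (auto simp: adj_commute)
    moreover have "w \<noteq> u" using uw by (auto simp: adj_def)
    ultimately show "z \<in> {u}"
      using tree_dominating_edge_meets[OF t uv dom wz] \<open>w \<noteq> v\<close> by auto
  qed (simp add: uw adj_commute[of E w u])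
  then show ?thesis
    by (simp add: degree_eq_card_neighbours[OF tree_simple_graph[OF t]])
qed

lemma tree_dominating_edge_pendant_sum_le:
  assumes t: "is_tree V E" and uv: "adj E u v" and dom: "degree E u + degree E v = card V"
  shows "(\<Sum>e \<in> {e \<in> E. u \<in> e} - {{u, v}}. exp (\<Prod>w\<in>e. real (degree E w)))
           \<le> real (degree E u - 1) * exp (real (degree E u))"
proof -
  have s: "simple_graph V E" using t by (rule tree_simple_graph)
  have "{u, v} \<in> {e \<in> E. u \<in> e}" using uv by (simp add: adj_def)
  then have card: "card ({e \<in> E. u \<in> e} - {{u, v}}) = degree E u - 1"
    unfolding degree_def using simple_graph_finite_edges[OF s] by (simp add: card_Diff_singleton)
  have "exp (\<Prod>w\<in>e. real (degree E w)) \<le> exp (real (degree E u))"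
    if e: "e \<in> {e \<in> E. u \<in> e} - {{u, v}}" for e
  proof -
    from e have "e \<in> E" by simp
    then obtain x y where xy: "e = {x, y}" "adj E x y" by (rule simple_graph_edgeE[OF s])
    moreover have "u = x \<or> u = y" using e xy by auto
    ultimately obtain w where w: "e = {u, w}" "adj E u w"
      by (metis adj_commute insert_commute)
    with e have "w \<noteq> v" by auto
    then have "degree E w = 1" using tree_dominating_edge_leaf[OF t uv dom w(2)] by simp
    with w show ?thesis by (simp add: adj_def)
  qed
  then have "(\<Sum>e \<in> {e \<in> E. u \<in> e} - {{u, v}}. exp (\<Prod>w\<in>e. real (degree E w)))
      \<le> real (card ({e \<in> E. u \<in> e} - {{u, v}})) * exp (real (degree E u))"
    by (rule sum_bounded_above)
  with card show ?thesis by simp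
qed

lemma expM2_tree_dominating_edge_le:
  assumes t: "is_tree V E" and uv: "adj E u v" and dom: "degree E u + degree E v = card V"
  shows "expM2 E \<le> exp (real (degree E u * degree E v))
      + real (degree E u - 1) * exp (real (degree E u)) + real (degree E v - 1) * exp (real (degree E v))"
proof -
  let ?f = "\<lambda>e. exp (\<Prod>w\<in>e. real (degree E w))"
  let ?Eu = "{e \<in> E. u \<in> e}" and ?Ev = "{e \<in> E. v \<in> e}"
  have s: "simple_graph V E" using t by (rule tree_simple_graph)
  have "u \<noteq> v" using uv by (simp add: adj_def)
  have "E \<subseteq> ?Eu \<union> ?Ev"
  proof
    fix e assume "e \<in> E"
    then obtain x y where "e = {x, y}" "adj E x y" by (rule simple_graph_edgeE[OF s])
    with \<open>e \<in> E\<close> show "e \<in> ?Eu \<union> ?Ev"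
      using tree_dominating_edge_meets[OF t uv dom] by blast
  qed
  then have cover: "?Eu \<union> ?Ev = E" by blast
  have common: "?Eu \<inter> ?Ev = {{u, v}}" using s uv by (rule simple_graph_edges_at_adj)
  have fin: "finite (?Eu \<union> ?Ev)" using simple_graph_finite_edges[OF s] by simp
  have "expM2 E = sum ?f (?Eu - ?Ev) + sum ?f (?Ev - ?Eu) + sum ?f (?Eu \<inter> ?Ev)"
    unfolding expM2_def sum_Un2[OF fin, symmetric] cover ..
  also have "\<dots> = sum ?f (?Eu - {{u, v}}) + sum ?f (?Ev - {{v, u}}) + ?f {u, v}"
  proof -
    have "?Ev \<inter> ?Eu = {{v, u}}" using common by (simp add: Int_commute insert_commute)
    then have "?Eu - ?Ev = ?Eu - {{u, v}}" "?Ev - ?Eu = ?Ev - {{v, u}}" using common by blast+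
    with common show ?thesis by simp
  qed
  also have "\<dots> \<le> real (degree E u - 1) * exp (real (degree E u))
      + real (degree E v - 1) * exp (real (degree E v)) + exp (real (degree E u * degree E v))"
    using tree_dominating_edge_pendant_sum_le[OF t uv dom]
      tree_dominating_edge_pendant_sum_le[OF t adj_commute[THEN iffD1, OF uv]] dom \<open>u \<noteq> v\<close>
    by (simp add: add.commute)
  finally show ?thesis by simp
qed

section \<open>Double stars\<close>

lemma double_star_edges_iff:
  "{p, q} \<in> double_star_edges a b \<longleftrightarrow>
     (p = 0 \<and> q \<in> {1..a + 1}) \<or> (q = 0 \<and> p \<in> {1..a + 1}) \<or>
     (p = a + 1 \<and> q \<in> {a + 2..a + b + 1}) \<or> (q = a + 1 \<and> p \<in> {a + 2..a + b + 1})"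
  unfolding double_star_edges_def by (auto simp: doubleton_eq_iff)

lemma double_star_is_tree:
  assumes "a \<ge> 1" "b \<ge> 1"
  shows "is_tree {0..<a + b + 2} (double_star_edges a b)"
proof -
  let ?S = "double_star_edges a b"
  have graph: "simple_graph {0..<a + b + 2} ?S"
    unfolding simple_graph_def double_star_edges_def by fastforce
  have adj_iff: "adj ?S x y \<longleftrightarrow> {x, y} \<in> ?S" for x y
    using simple_graph_edge_iff_adj[OF graph] by simp
  have to_root: "(adj ?S)\<^sup>*\<^sup>* x 0" if x: "x \<in> {0..<a + b + 2}" for x
  proof -
    consider "x = 0" | "x \<in> {1..a + 1}" | "x \<in> {a + 2..a + b + 1}"
      using x by fastforce
    then show ?thesis
    proof cases
      case 2
      then have "adj ?S x 0" by (simp add: adj_iff double_star_edges_iff)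
      then show ?thesis by simp
    next
      case 3
      then have "adj ?S x (a + 1)" "adj ?S (a + 1) 0"
        by (simp_all add: adj_iff double_star_edges_iff)
      then show ?thesis by (meson converse_rtranclp_into_rtranclp r_into_rtranclp)
    qed simp
  qed
  have "connected_graph {0..<a + b + 2} ?S"
    unfolding connected_graph_def
    using to_root sympD[OF symp_rtranclp[OF symp_adj]] by (meson rtranclp_trans)
  moreover have "\<not> is_cycle ?S vs" for vs
  proof (rule no_cycle_if_two_branch_vertices[of _ 0 "a + 1"])
    fix x y z assume "adj ?S x y" "adj ?S x z" "y \<noteq> z"
    then show "x = 0 \<or> x = a + 1"
      unfolding adj_iff double_star_edges_iff by auto
  qed
  ultimately show ?thesis
    using graph unfolding is_tree_def by auto
qed

lemma expM2_double_star_ge: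
  assumes "a \<ge> 1" "b \<ge> 1"
  shows "exp (real ((a + 1) * (b + 1))) + 2 * exp 2 \<le> expM2 (double_star_edges a b)"
proof -
  let ?S = "double_star_edges a b"
  let ?d = "\<lambda>v. real (degree ?S v)"
  let ?f = "\<lambda>e. exp (\<Prod>v\<in>e. ?d v)"
  have graph: "simple_graph {0..<a + b + 2} ?S"
    using double_star_is_tree[OF assms] by (rule tree_simple_graph)
  have adj_iff: "adj ?S x y \<longleftrightarrow> {x, y} \<in> ?S" for x y
    using simple_graph_edge_iff_adj[OF graph] by simp
  have degree_ge: "card A \<le> degree ?S x" if "A \<subseteq> neighbours ?S x" for A x
    using card_mono[OF finite_neighbours[OF graph] that]
    by (simp add: degree_eq_card_neighbours[OF graph])
  have "card {1..a + 1} \<le> degree ?S 0"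
    by (rule degree_ge) (auto simp: adj_iff double_star_edges_iff)
  then have d0: "a + 1 \<le> ?d 0" by simp
  have "card (insert 0 {a + 2..a + b + 1}) \<le> degree ?S (a + 1)"
    by (rule degree_ge) (auto simp: adj_iff double_star_edges_iff)
  then have d1: "b + 1 \<le> ?d (a + 1)" by simp
  have edges: "{0, a + 1} \<in> ?S" "{0, 1} \<in> ?S" "{a + 1, a + 2} \<in> ?S"
    using assms by (auto simp: double_star_edges_iff)
  have leaves: "1 \<le> ?d 1" "1 \<le> ?d (a + 2)"
    using degree_pos[OF graph edges(2), of 1] degree_pos[OF graph edges(3), of "a + 2"]
    by (auto simp: Suc_le_eq)
  have "real ((a + 1) * (b + 1)) \<le> ?d 0 * ?d (a + 1)"
    unfolding of_nat_mult using mult_mono[OF d0 d1] by simp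
  then have "exp (real ((a + 1) * (b + 1))) \<le> ?f {0, a + 1}" by simp
  moreover have "exp 2 \<le> ?f {0, 1}"
    using mult_mono[of 2 "?d 0" 1 "?d 1"] d0 leaves assms by simp
  moreover have "exp 2 \<le> ?f {a + 1, a + 2}"
    using mult_mono[of 2 "?d (a + 1)" 1 "?d (a + 2)"] d1 leaves assms by simp
  moreover have "?f {0, a + 1} + ?f {0, 1} + ?f {a + 1, a + 2} = sum ?f {{0, a + 1}, {0, 1}, {a + 1, a + 2}}"
    using assms by (simp add: doubleton_eq_iff)
  moreover have "\<dots> \<le> expM2 ?S"
    unfolding expM2_def using edges simple_graph_finite_edges[OF graph]
    by (intro sum_mono2) auto
  ultimately show ?thesis by linarith
qed

lemma double_star_labelling:
  assumes "finite A" "finite B" "card A = a" "card B = b"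
    and "u \<notin> A \<union> B" "v \<notin> A \<union> B" "u \<noteq> v" "A \<inter> B = {}"
  obtains f where "bij_betw f (({u} \<union> A) \<union> ({v} \<union> B)) {0..<a + b + 2}"
    and "f u = 0" "f ` A = {1..a}" "f v = a + 1" "f ` B = {a + 2..a + b + 1}"
proof -
  obtain g h where g: "bij_betw g A {1..a}" and h: "bij_betw h B {a + 2..a + b + 1}"
    using finite_same_card_bij[OF assms(1), of "{1..a}"] finite_same_card_bij[OF assms(2), of "{a + 2..a + b + 1}"]
      assms(3,4) by auto
  define f where "f x = (if x = u then 0 else if x = v then a + 1 else if x \<in> A then g x else h x)" for x
  have "f x = g x" if "x \<in> A" for x using that assms(5,6) by (auto simp: f_def)
  with g have f_A: "bij_betw f A {1..a}" using bij_betw_cong[of A f g] by simp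
  have "f x = h x" if "x \<in> B" for x using that assms(5,6,8) by (auto simp: f_def)
  with h have f_B: "bij_betw f B {a + 2..a + b + 1}" using bij_betw_cong[of B f h] by simp
  have f_uv: "f u = 0" "f v = a + 1" using assms(7) by (simp_all add: f_def)
  have "bij_betw f (({u} \<union> A) \<union> ({v} \<union> B)) (({0} \<union> {1..a}) \<union> ({a + 1} \<union> {a + 2..a + b + 1}))"
    using f_A f_B f_uv by (intro bij_betw_combine bij_betw_singletonI) auto
  moreover have "({0} \<union> {1..a}) \<union> ({a + 1} \<union> {a + 2..a + b + 1}) = {0..<a + b + 2}" by auto
  ultimately show thesis
    using that f_uv f_A f_B by (simp add: bij_betw_def)
qed

lemma tree_dominating_edge_iso_double_star:
  assumes t: "is_tree V E" and uv: "adj E u v"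
    and du: "degree E u = a + 1" and dv: "degree E v = b + 1" and card_V: "card V = a + b + 2"
  shows "graph_iso V E {0..<card V} (double_star_edges a b)"
proof -
  have s: "simple_graph V E" using t by (rule tree_simple_graph)
  have dom: "degree E u + degree E v = card V" using du dv card_V by simp
  define A where "A = neighbours E u - {v}"
  define B where "B = neighbours E v - {u}"
  have Nu: "neighbours E u = insert v A" and Nv: "neighbours E v = insert u B"
    using uv adj_commute[of E u v] by (auto simp: A_def B_def)
  have AB: "A \<inter> B = {}"
    using tree_adj_neighbours_disjoint[OF t uv] by (auto simp: A_def B_def)
  have uv_notin: "u \<notin> A \<union> B" "v \<notin> A \<union> B" "u \<noteq> v"
    using uv by (auto simp: A_def B_def)
  have V: "V = ({u} \<union> A) \<union> ({v} \<union> B)"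
    using tree_dominating_edge_cover[OF t uv dom] Nu Nv by auto
  have fin: "finite A" "finite B"
    using finite_neighbours[OF s] by (simp_all add: A_def B_def)
  have "card A = a" "card B = b"
    using du dv Nu Nv uv_notin fin by (simp_all add: degree_eq_card_neighbours[OF s])
  then obtain f where bij: "bij_betw f V {0..<card V}"
    and f: "f u = 0" "f ` A = {1..a}" "f v = a + 1" "f ` B = {a + 2..a + b + 1}"
    using double_star_labelling[OF fin _ _ uv_notin AB] V card_V by metis
  have f_mem_iff: "f x \<in> f ` C \<longleftrightarrow> x \<in> C" if "x \<in> V" "C \<subseteq> V" for x C
    using inj_on_image_mem_iff[OF bij_betw_imp_inj_on[OF bij]] that by blast
  have images: "f ` {u} = {0}" "f ` insert v A = {1..a + 1}" "f ` {v} = {a + 1}"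
      "f ` B = {a + 2..a + b + 1}"
    using f by auto
  have parts: "{u} \<subseteq> V" "insert v A \<subseteq> V" "{v} \<subseteq> V" "B \<subseteq> V"
    using V by auto
  have adj_iff: "adj E x y \<longleftrightarrow> (x = u \<and> y \<in> insert v A) \<or> (y = u \<and> x \<in> insert v A) \<or>
      (x = v \<and> y \<in> B) \<or> (y = v \<and> x \<in> B)" for x y
    using tree_dominating_edge_meets[OF t uv dom, of x y] Nu Nv uv adj_commute[of E x y]
    by auto
  have edges: "{x, y} \<in> E \<longleftrightarrow> {f x, f y} \<in> double_star_edges a b" if "x \<in> V" "y \<in> V" for x y
    unfolding simple_graph_edge_iff_adj[OF s] adj_iff double_star_edges_iff
    using f_mem_iff[OF that(1)] f_mem_iff[OF that(2)] images parts
    by (metis singleton_iff)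
  show ?thesis unfolding graph_iso_def using bij edges by (intro exI[of _ f]) simp
qed

section \<open>The maximal trees\<close>

lemma expM2_tree_dominating_edge_less:
  assumes t: "is_tree V E" and uv: "adj E u v" and dom: "degree E u + degree E v = card V"
    and "4 \<le> card V" and unbalanced: "degree E u * degree E v \<noteq> (card V)\<^sup>2 div 4"
  shows "expM2 E < exp (real ((card V)\<^sup>2 div 4)) + 2 * exp 2"
proof -
  let ?n = "card V" and ?du = "degree E u" and ?dv = "degree E v"
  have "{u, v} \<in> E" using uv by (simp add: adj_def)
  then have pos: "1 \<le> ?du" "1 \<le> ?dv"
    using degree_pos[OF tree_simple_graph[OF t]] by (simp_all add: Suc_le_eq)
  have "?du * ?dv \<le> ?n\<^sup>2 div 4 - 1"
    using mult_le_square_div_4[of ?du ?dv ?n] dom unbalanced by simp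
  then have center: "exp (real (?du * ?dv)) \<le> exp (real (?n\<^sup>2 div 4 - 1))"
    by (simp only: exp_le_cancel_iff of_nat_le_iff)
  have pendants: "real (?du - 1) * exp (real ?du) \<le> real (?du - 1) * exp (real (?n - 1))"
    "real (?dv - 1) * exp (real ?dv) \<le> real (?dv - 1) * exp (real (?n - 1))"
    using dom pos by (intro mult_left_mono; simp)+
  have count: "real (?du - 1) + real (?dv - 1) = real (?n - 2)" using dom pos by simp
  have "expM2 E \<le> exp (real (?du * ?dv))
      + real (?du - 1) * exp (real ?du) + real (?dv - 1) * exp (real ?dv)"
    by (rule expM2_tree_dominating_edge_le[OF t uv dom])
  also have "\<dots> \<le> exp (real (?n\<^sup>2 div 4 - 1))
      + real (?du - 1) * exp (real (?n - 1)) + real (?dv - 1) * exp (real (?n - 1))"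
    using center pendants by (intro add_mono)
  also have "\<dots> = real (?n - 2) * exp (real (?n - 1)) + exp (real (?n\<^sup>2 div 4 - 1))"
    unfolding count[symmetric] by (simp add: algebra_simps)
  also have "\<dots> < exp (real (?n\<^sup>2 div 4)) + 2 * exp 2"
    using exp_dominating_edge_bound_less \<open>4 \<le> card V\<close> by blast
  finally show ?thesis .
qed

lemma expM2_tree_no_dominating_edge_le:
  assumes t: "is_tree V E" and no_dom: "\<And>u v. adj E u v \<Longrightarrow> degree E u + degree E v \<noteq> card V"
  shows "expM2 E \<le> exp (real ((card V)\<^sup>2 div 4))"
proof -
  let ?n = "card V"
  have s: "simple_graph V E" using t by (rule tree_simple_graph)
  have "1 \<le> ?n" using t by (simp add: is_tree_def simple_graph_def Suc_le_eq card_gt_0_iff)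
  have sum_le: "degree E x + degree E y \<le> ?n - 1" if "adj E x y" for x y
    using tree_adj_degree_sum_le[OF t that] no_dom[OF that] by simp
  have "expM2 E \<le> real ?n ^ 2 / 4 * exp (real ((?n - 1)\<^sup>2 div 4))"
  proof (rule expM2_le_of_edge_degree_bounds[OF s])
    show "degree E x + degree E y \<le> ?n" if "adj E x y" for x y
      using sum_le[OF that] by simp
    show "degree E x * degree E y \<le> (?n - 1)\<^sup>2 div 4" if "adj E x y" for x y
      using sum_le[OF that] by (rule mult_le_square_div_4)
  qed
  also have "\<dots> \<le> exp (real (?n div 2)) * exp (real ((?n - 1)\<^sup>2 div 4))"
    using square_le_four_exp_half[of ?n] by (intro mult_right_mono) auto
  also have "\<dots> = exp (real (?n\<^sup>2 div 4))"
    unfolding square_div_4_eq_pred_square_div_4_add_half[OF \<open>1 \<le> ?n\<close>]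
    by (simp add: exp_add[symmetric])
  finally show ?thesis .
qed

lemma expM2_tree_less_unless_balanced_double_star:
  assumes t: "is_tree V E" and card_V: "card V = a + b + 2"
    and "1 \<le> a" and "a \<le> b" and "b \<le> a + 1"
    and not_iso: "\<not> graph_iso V E {0..<card V} (double_star_edges a b)"
  shows "expM2 E < exp (real ((a + 1) * (b + 1))) + 2 * exp 2"
proof -
  have P: "(a + 1) * (b + 1) = (card V)\<^sup>2 div 4"
    using balanced_mult_eq_square_div_4[of "a + 1" "b + 1"] assms(4,5) card_V by simp
  have "4 \<le> card V" using card_V assms(3,4) by simp
  show ?thesis
  proof (cases "\<exists>u v. adj E u v \<and> degree E u + degree E v = card V")
    case True
    then obtain u v where uv: "adj E u v" and dom: "degree E u + degree E v = card V" by blast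
    have "degree E u * degree E v \<noteq> (a + 1) * (b + 1)"
    proof
      assume "degree E u * degree E v = (a + 1) * (b + 1)"
      moreover have "degree E u + degree E v = (a + 1) + (b + 1)" using dom card_V by simp
      ultimately have "degree E u = a + 1 \<and> degree E v = b + 1 \<or> degree E v = a + 1 \<and> degree E u = b + 1"
        using add_eq_mult_eq_imp_eq by (metis add_left_cancel add.commute)
      then have "graph_iso V E {0..<card V} (double_star_edges a b)"
        using tree_dominating_edge_iso_double_star[OF t uv]
          tree_dominating_edge_iso_double_star[OF t adj_commute[THEN iffD1, OF uv]] card_V
        by blast
      with not_iso show False by contradiction
    qed
    then show ?thesis
      unfolding P using expM2_tree_dominating_edge_less[OF t uv dom \<open>4 \<le> card V\<close>] by simp
  next
    case False
    then have "expM2 E \<le> exp (real ((a + 1) * (b + 1)))"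
      unfolding P using expM2_tree_no_dominating_edge_le[OF t] by blast
    then show ?thesis using exp_gt_zero[of 2] by linarith
  qed
qed

theorem theorem1:
  fixes n :: nat and E :: "nat set set"
  assumes "n \<ge> 4"
    and "is_tree {0..<n} E"
    and "\<not> graph_iso {0..<n} E {0..<n}
            (double_star_edges ((n - 2) div 2) ((n - 2) - (n - 2) div 2))"
  shows "\<exists>E'. is_tree {0..<n} E' \<and> expM2 E' > expM2 E"
proof -
  define a b where "a = (n - 2) div 2" and "b = (n - 2) - (n - 2) div 2"
  have ab: "1 \<le> a" "a \<le> b" "b \<le> a + 1" "card {0..<n} = a + b + 2"
    using assms(1) by (auto simp: a_def b_def)
  have "expM2 E < exp (real ((a + 1) * (b + 1))) + 2 * exp 2"
    using expM2_tree_less_unless_balanced_double_star[OF assms(2) ab(4,1-3)] assms(3)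
    by (simp add: a_def b_def)
  also have "\<dots> \<le> expM2 (double_star_edges a b)"
    using ab(1,2) by (intro expM2_double_star_ge) auto
  finally show ?thesis
    using double_star_is_tree[of a b] ab by auto
qed

end
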